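(* Let $G(\mathcal{M})=(R,T;E;c)$ and $G(\mathcal{M}')=(R,T;E;c')$ be two robot-task graphs where $c$ and $c'$ are injective on $E$. Let $\textsc{Auction}(\mathcal{M})=(W=(w_k),a)$ and $\textsc{Auction}(\mathcal{M}')=(W'=(w'_k),a')$. Suppose there exists some edge $e\in E$ which does not appear in $W$ such that $c'(f)=c(f)$ for all $f\in E\setminus\{e\}$. Then $\textsc{Auction}(\mathcal{M})=\textsc{Auction}(\mathcal{M}')$ if and only if $c'(e)>\max_{k\in B_e}c(w_k)$.
   Context: $R$ (robots) and $T$ (tasks) are finite disjoint sets with $R\neq\emptyset$, $|R\sqcup T|\ge3$. The robot-task graph $(R,T;E;c)$ has vertex set $R\sqcup T$, edge set $E$ consisting of all 2-element subsets of $R\sqcup T$, and a non-negative edge cost $c:E\to\mathbb{R}_+$ (with $\mathbb{R}_+=[0,\infty)\cup\{\infty\}$); injective means distinct edges have distinct costs. $\textsc{Auction}$ on $(R,T;E;c)$: set $A=\emptyset$ and $a(r)=0$ for all $r\in R$. For $k=1,\dots,|T|$ (bid rounds): let $w_k=\{s,t\}$ be the edge with $s\in R\cup A$, $t\in T\setminus A$ minimising $c(\{s,t\})$; set $a(t)=k$ and $A\leftarrow A\cup\{t\}$. The output is the list $W=(w_1,\dots,w_{|T|})$ of winning edges and the assignment function $a:R\sqcup T\to\{0,\dots,|T|\}$. Two auction outputs are equal if they have the same list and the same assignment function. For an edge $e=\{x,y\}$, $B_e=\{k\in\mathbb{Z}:\min(a(x),a(y))<k\le\max(a(x),a(y))\}$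 (computed from the output of $\textsc{Auction}(\mathcal{M})$); it is the set of bid rounds of $\textsc{Auction}(\mathcal{M})$ in which $e$ is considered. *)

theory Defs
  imports Main "HOL-Library.Extended_Nonnegative_Real"
begin

definition rt_edges :: "'v set \<Rightarrow> 'v set \<Rightarrow> 'v set set" where
  "rt_edges R T = {e. \<exists>x y. x \<in> R \<union> T \<and> y \<in> R \<union> T \<and> x \<noteq> y \<and> e = {x, y}}"

definition candidates :: "'v set \<Rightarrow> 'v set \<Rightarrow> 'v set \<Rightarrow> 'v set set" where
  "candidates R T A = {{s, t} | s t. s \<in> R \<union> A \<and> t \<in> T - A}"

text \<open>State after k bid rounds: (assigned tasks A, winning edges W, assignment a).\<close>
fun auction_state :: "'v set \<Rightarrow> 'v set \<Rightarrow> ('v set \<Rightarrow> ennreal) \<Rightarrow> nat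
    \<Rightarrow> 'v set \<times> 'v set list \<times> ('v \<Rightarrow> nat)" where
  "auction_state R T c 0 = ({}, [], (\<lambda>_. 0))"
| "auction_state R T c (Suc k) =
     (case auction_state R T c k of (A, W, a) \<Rightarrow>
        let w = arg_min c (\<lambda>e. e \<in> candidates R T A);
            t = (THE t. t \<in> w \<and> t \<in> T - A)
        in (insert t A, W @ [w], a(t := Suc k)))"

definition auction :: "'v set \<Rightarrow> 'v set \<Rightarrow> ('v set \<Rightarrow> ennreal) \<Rightarrow> 'v set list \<times> ('v \<Rightarrow> nat)" where
  "auction R T c = (case auction_state R T c (card T) of (A, W, a) \<Rightarrow> (W, a))"

text \<open>B_e: bid rounds in which edge e = {x,y} is considered.\<close>
definition bid_rounds :: "('v \<Rightarrow> nat) \<Rightarrow> 'v set \<Rightarrow> nat set" where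
  "bid_rounds a e = {k. Min (a ` e) < k \<and> k \<le> Max (a ` e)}"

end

theory Submission
  imports Defs
begin

text \<open>Changing the cost of an edge e that never wins can only matter in a bid round in which e
is a candidate, and there it replaces that round's winner exactly when c'(e) undercuts the
winning cost (ties are excluded by injectivity of c'). The final assignment tells in which
rounds e = {x, y} is a candidate: a vertex lies in R or among the tasks assigned before round k
iff its label is below k, so e is a candidate in round k iff k \<in> B_e. If c'(e) exceeds every
winning cost over B_e, both runs make the same choice in every round. Otherwise the runs
agree up to the first undercutting round, in which the perturbed run picks e, an edge the
original run never picks.\<close>

lemma arg_min_on_inj_eq:
  fixes f :: "'a \<Rightarrow> 'b::order"
  assumes "inj_on f C" "a \<in> C" "\<And>y. y \<in> C \<Longrightarrow> f a \<le> f y"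
  shows "arg_min_on f C = a"
  unfolding arg_min_on_def using assms by (intro arg_min_inj_eq) auto

lemma arg_min_on_perturbed:
  fixes c c' :: "'a \<Rightarrow> 'b::linorder"
  assumes "finite C" "C \<noteq> {}" "inj_on c' C"
    and "\<forall>f \<in> C - {e}. c' f = c f" and "arg_min_on c C \<noteq> e"
  shows "arg_min_on c' C =
    (if e \<in> C \<and> c' e < c (arg_min_on c C) then e else arg_min_on c C)"
proof -
  let ?w = "arg_min_on c C"
  have w: "?w \<in> C" "\<And>f. f \<in> C \<Longrightarrow> c ?w \<le> c f"
    using arg_min_if_finite(1)[OF assms(1,2), of c] arg_min_least[OF assms(1,2), of _ c] by simp_all
  show ?thesis
  proof (cases "e \<in> C \<and> c' e < c ?w")
    case True
    have "c' e \<le> c' f" if "f \<in> C" for f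
      using True w(2)[OF that] assms(4) that by (cases "f = e") auto
    with True assms(3) show ?thesis by (simp add: arg_min_on_inj_eq)
  next
    case False
    have "c' ?w \<le> c' f" if "f \<in> C" for f
      using False w assms(4,5) that by (cases "f = e") (auto simp: not_less)
    then have "arg_min_on c' C = ?w" using assms(3) w(1) by (rule arg_min_on_inj_eq[rotated 2])
    with False show ?thesis by auto
  qed
qed

lemma doubleton_mem_candidates_iff:
  "{x, y} \<in> candidates R T A \<longleftrightarrow>
    (x \<in> R \<union> A \<and> y \<in> T - A) \<or> (y \<in> R \<union> A \<and> x \<in> T - A)"
  unfolding candidates_def by (auto simp: doubleton_eq_iff)

lemma Suc_mem_bid_rounds_doubleton_iff:
  "Suc k \<in> bid_rounds a {x, y} \<longleftrightarrow> (a x \<le> k \<and> k < a y) \<or> (a y \<le> k \<and> k < a x)"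
  unfolding bid_rounds_def by auto

lemma bid_rounds_subset:
  assumes "finite e" "e \<noteq> {}" "\<And>x. a x \<le> m"
  shows "bid_rounds a e \<subseteq> {1..m}"
proof -
  have "Max (a ` e) \<le> m" using assms by simp
  then show ?thesis unfolding bid_rounds_def by auto
qed

definition assigned_tasks :: "'v set \<Rightarrow> 'v set \<Rightarrow> ('v set \<Rightarrow> ennreal) \<Rightarrow> nat \<Rightarrow> 'v set" where
  "assigned_tasks R T c k = fst (auction_state R T c k)"

definition winner_list :: "'v set \<Rightarrow> 'v set \<Rightarrow> ('v set \<Rightarrow> ennreal) \<Rightarrow> nat \<Rightarrow> 'v set list" where
  "winner_list R T c k = fst (snd (auction_state R T c k))"

definition assignment :: "'v set \<Rightarrow> 'v set \<Rightarrow> ('v set \<Rightarrow> ennreal) \<Rightarrow> nat \<Rightarrow> 'v \<Rightarrow> nat" where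
  "assignment R T c k = snd (snd (auction_state R T c k))"

text \<open>Rounds are numbered from 0 here: round_winner R T c k is the paper's w_(k+1), and the
task it assigns gets label Suc k.\<close>

definition round_winner :: "'v set \<Rightarrow> 'v set \<Rightarrow> ('v set \<Rightarrow> ennreal) \<Rightarrow> nat \<Rightarrow> 'v set" where
  "round_winner R T c k = arg_min_on c (candidates R T (assigned_tasks R T c k))"

definition round_task :: "'v set \<Rightarrow> 'v set \<Rightarrow> ('v set \<Rightarrow> ennreal) \<Rightarrow> nat \<Rightarrow> 'v" where
  "round_task R T c k = (THE t. t \<in> round_winner R T c k \<and> t \<in> T - assigned_tasks R T c k)"

lemma auction_state_Suc_eq:
  "auction_state R T c (Suc k) =
    (insert (round_task R T c k) (assigned_tasks R T c k),
     winner_list R T c k @ [round_winner R T c k],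
     (assignment R T c k)(round_task R T c k := Suc k))"
proof -
  have state: "auction_state R T c k = (assigned_tasks R T c k, winner_list R T c k, assignment R T c k)"
    by (simp add: assigned_tasks_def winner_list_def assignment_def)
  show ?thesis
    unfolding auction_state.simps(2) state
    by (simp add: Let_def round_task_def round_winner_def arg_min_on_def)
qed

lemma auction_state_components_0 [simp]:
  "assigned_tasks R T c 0 = {}" "winner_list R T c 0 = []" "assignment R T c 0 = (\<lambda>_. 0)"
  by (simp_all add: assigned_tasks_def winner_list_def assignment_def)

lemma auction_state_components_Suc [simp]:
  "assigned_tasks R T c (Suc k) = insert (round_task R T c k) (assigned_tasks R T c k)"
  "winner_list R T c (Suc k) = winner_list R T c k @ [round_winner R T c k]"
  "assignment R T c (Suc k) = (assignment R T c k)(round_task R T c k := Suc k)"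
  by (simp_all add: assigned_tasks_def winner_list_def assignment_def auction_state_Suc_eq
      del: auction_state.simps)

lemma auction_eq_final_state:
  "auction R T c = (winner_list R T c (card T), assignment R T c (card T))"
  by (simp add: auction_def winner_list_def assignment_def split: prod.split)

lemma length_winner_list [simp]: "length (winner_list R T c k) = k"
  by (induction k) simp_all

lemma nth_winner_list: "j < k \<Longrightarrow> winner_list R T c k ! j = round_winner R T c j"
  by (induction k) (auto simp: nth_append less_Suc_eq)

lemma assignment_le: "assignment R T c k x \<le> k"
  by (induction k) (simp_all add: le_SucI)

lemma assignment_pos_iff: "0 < assignment R T c k x \<longleftrightarrow> x \<in> assigned_tasks R T c k"
  by (induction k) auto

lemma assigned_tasks_mono: "j \<le> k \<Longrightarrow> assigned_tasks R T c j \<subseteq> assigned_tasks R T c k"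
  by (induction k rule: dec_induct) auto

lemma auction_state_eq_if_same_winners:
  assumes "\<forall>j<k. arg_min_on c' (candidates R T (assigned_tasks R T c j)) = round_winner R T c j"
  shows "auction_state R T c k = auction_state R T c' k"
  using assms
proof (induction k)
  case (Suc k)
  then have IH: "auction_state R T c k = auction_state R T c' k" by simp
  then have "assigned_tasks R T c' k = assigned_tasks R T c k"
    by (simp add: assigned_tasks_def)
  with Suc.prems have "round_winner R T c' k = round_winner R T c k"
    by (simp add: round_winner_def)
  moreover from IH have "winner_list R T c' k = winner_list R T c k"
    "assignment R T c' k = assignment R T c k"
    by (simp_all add: winner_list_def assignment_def)
  ultimately show ?case
    using \<open>assigned_tasks R T c' k = assigned_tasks R T c k\<close>
    by (simp add: auction_state_Suc_eq round_task_def del: auction_state.simps)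
qed simp

locale robot_task_sets =
  fixes R T :: "'v set"
  assumes finite_R: "finite R" and finite_T: "finite T"
    and disjoint: "R \<inter> T = {}" and R_nonempty: "R \<noteq> {}"
begin

lemma candidates_subset_edges: "A \<subseteq> T \<Longrightarrow> candidates R T A \<subseteq> rt_edges R T"
  using disjoint unfolding candidates_def rt_edges_def by blast

lemma finite_candidates: "A \<subseteq> T \<Longrightarrow> finite (candidates R T A)"
proof -
  assume "A \<subseteq> T"
  then have "candidates R T A \<subseteq> Pow (R \<union> T)" unfolding candidates_def by auto
  then show ?thesis by (rule finite_subset) (simp add: finite_R finite_T)
qed

lemma candidates_nonempty:
  assumes "A \<subseteq> T" "A \<noteq> T"
  shows "candidates R T A \<noteq> {}"
proof -
  obtain t where "t \<in> T - A" using assms by blast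
  moreover obtain r where "r \<in> R" using R_nonempty by blast
  ultimately have "{r, t} \<in> candidates R T A" unfolding candidates_def by blast
  then show ?thesis by blast
qed

lemma arg_min_on_candidates:
  fixes c :: "'v set \<Rightarrow> 'b::order"
  assumes "A \<subseteq> T" "A \<noteq> T"
  shows "arg_min_on c (candidates R T A) \<in> candidates R T A"
  using arg_min_if_finite(1)[OF finite_candidates[OF assms(1)] candidates_nonempty[OF assms]] .

lemma unassigned_task_of_candidate:
  assumes "A \<subseteq> T" "w \<in> candidates R T A"
  shows "(THE t. t \<in> w \<and> t \<in> T - A) \<in> T - A"
proof -
  obtain s t where w: "w = {s, t}" "s \<in> R \<union> A" "t \<in> T - A"
    using assms(2) unfolding candidates_def by blast
  have "(THE t. t \<in> w \<and> t \<in> T - A) = t"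
    using w assms(1) disjoint by (intro the_equality) auto
  with w show ?thesis by simp
qed

lemma assigned_tasks_subset_card:
  "k \<le> card T \<Longrightarrow> assigned_tasks R T c k \<subseteq> T \<and> card (assigned_tasks R T c k) = k"
proof (induction k)
  case (Suc k)
  then have A: "assigned_tasks R T c k \<subseteq> T" "card (assigned_tasks R T c k) = k" by simp_all
  with Suc.prems have "assigned_tasks R T c k \<noteq> T" by auto
  with A have "round_task R T c k \<in> T - assigned_tasks R T c k"
    unfolding round_task_def round_winner_def
    by (intro unassigned_task_of_candidate[OF A(1)] arg_min_on_candidates[OF A(1)])
  moreover have "finite (assigned_tasks R T c k)" using A(1) finite_T by (rule finite_subset)
  ultimately show ?case using A by simp
qed simp

lemma round_winner_in_candidates:
  assumes "k < card T"
  shows "round_winner R T c k \<in> candidates R T (assigned_tasks R T c k)"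
proof -
  have "assigned_tasks R T c k \<subseteq> T" "assigned_tasks R T c k \<noteq> T"
    using assigned_tasks_subset_card[of k c] assms by auto
  then show ?thesis unfolding round_winner_def by (rule arg_min_on_candidates)
qed

lemma round_task_unassigned:
  assumes "k < card T"
  shows "round_task R T c k \<notin> assigned_tasks R T c k"
proof -
  have "assigned_tasks R T c k \<subseteq> T" using assigned_tasks_subset_card[of k c] assms by simp
  from unassigned_task_of_candidate[OF this round_winner_in_candidates[OF assms]]
  show ?thesis unfolding round_task_def by simp
qed

lemma assigned_tasks_final: "assigned_tasks R T c (card T) = T"
  using assigned_tasks_subset_card[of "card T" c] card_subset_eq[OF finite_T] by simp

lemma assigned_tasks_eq:
  assumes "k \<le> m" "m \<le> card T"
  shows "assigned_tasks R T c k = {x. 0 < assignment R T c m x \<and> assignment R T c m x \<le> k}"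
  using assms
proof (induction m rule: dec_induct)
  case base
  show ?case by (auto simp: assignment_pos_iff assignment_le)
next
  case (step m)
  have "round_task R T c m \<notin> assigned_tasks R T c m"
    using step.hyps(2) step.prems by (simp add: round_task_unassigned)
  moreover have "assigned_tasks R T c k \<subseteq> assigned_tasks R T c m"
    using step.hyps(1) by (rule assigned_tasks_mono)
  ultimately have "round_task R T c m \<notin> assigned_tasks R T c k" by blast
  with step show ?case by auto
qed

lemma final_assignment_le_iff:
  assumes "z \<in> R \<union> T" "k \<le> card T"
  shows "assignment R T c (card T) z \<le> k \<longleftrightarrow> z \<in> R \<union> assigned_tasks R T c k"
proof -
  have "z \<in> T \<longleftrightarrow> 0 < assignment R T c (card T) z"
    by (simp add: assignment_pos_iff assigned_tasks_final)
  moreover have "z \<in> assigned_tasks R T c k \<longleftrightarrow>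
      0 < assignment R T c (card T) z \<and> assignment R T c (card T) z \<le> k"
    using assigned_tasks_eq[OF assms(2) order.refl, of c] by simp
  ultimately show ?thesis using assms(1) disjoint by auto
qed

lemma mem_candidates_iff_bid_round:
  assumes "k < card T" "e \<in> rt_edges R T"
  shows "e \<in> candidates R T (assigned_tasks R T c k) \<longleftrightarrow>
    Suc k \<in> bid_rounds (assignment R T c (card T)) e"
proof -
  obtain x y where e: "e = {x, y}" "x \<in> R \<union> T" "y \<in> R \<union> T"
    using assms(2) unfolding rt_edges_def by blast
  let ?A = "assigned_tasks R T c k" and ?a = "assignment R T c (card T)"
  have classify: "(z \<in> R \<union> ?A \<longleftrightarrow> ?a z \<le> k) \<and> (z \<in> T - ?A \<longleftrightarrow> k < ?a z)"
    if "z \<in> R \<union> T" for z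
    using final_assignment_le_iff[OF that, of k c] that assms(1) disjoint by auto
  show ?thesis
    unfolding e(1) doubleton_mem_candidates_iff Suc_mem_bid_rounds_doubleton_iff
    by (simp only: classify[OF e(2)] classify[OF e(3)])
qed

lemma bid_rounds_condition_iff:
  assumes "e \<in> rt_edges R T"
  shows "(let (W, a) = auction R T c; B = bid_rounds a e in
      B = {} \<or> Max ((\<lambda>k. c (W ! (k - 1))) ` B) < x) \<longleftrightarrow>
    (\<forall>j<card T. e \<in> candidates R T (assigned_tasks R T c j) \<longrightarrow> c (round_winner R T c j) < x)"
proof -
  let ?W = "winner_list R T c (card T)" and ?B = "bid_rounds (assignment R T c (card T)) e"
  have "finite e" "e \<noteq> {}" using assms unfolding rt_edges_def by auto
  then have B: "?B \<subseteq> {1..card T}" using assignment_le by (rule bid_rounds_subset)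
  then have "finite ?B" by (rule finite_subset) simp
  then have "(?B = {} \<or> Max ((\<lambda>k. c (?W ! (k - 1))) ` ?B) < x) \<longleftrightarrow>
      (\<forall>k\<in>?B. c (?W ! (k - 1)) < x)"
    by (cases "?B = {}") (simp_all add: Max_less_iff)
  also have "\<dots> \<longleftrightarrow> (\<forall>j<card T. Suc j \<in> ?B \<longrightarrow> c (?W ! j) < x)"
  proof -
    have "k \<in> ?B \<Longrightarrow> k = Suc (k - 1) \<and> k - 1 < card T" for k
      using B by fastforce
    then show ?thesis by (metis diff_Suc_1)
  qed
  also have "\<dots> \<longleftrightarrow>
      (\<forall>j<card T. e \<in> candidates R T (assigned_tasks R T c j) \<longrightarrow> c (round_winner R T c j) < x)"
  proof -
    have "Suc j \<in> ?B \<longleftrightarrow> e \<in> candidates R T (assigned_tasks R T c j)"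
      and "?W ! j = round_winner R T c j" if "j < card T" for j
      using that by (simp_all add: mem_candidates_iff_bid_round[OF _ assms] nth_winner_list)
    then show ?thesis by simp
  qed
  finally show ?thesis by (simp add: auction_eq_final_state)
qed

end

locale single_edge_perturbation = robot_task_sets +
  fixes c c' :: "'v set \<Rightarrow> ennreal" and e :: "'v set"
  assumes inj_c': "inj_on c' (rt_edges R T)"
    and e_not_won: "e \<notin> set (fst (auction R T c))"
    and costs_agree: "\<forall>f \<in> rt_edges R T - {e}. c' f = c f"
begin

lemma round_winner_ne_perturbed_edge: "j < card T \<Longrightarrow> round_winner R T c j \<noteq> e"
  using e_not_won nth_winner_list[of j "card T" R T c]
  by (metis auction_eq_final_state fst_conv length_winner_list nth_mem)

lemma perturbed_arg_min_on_candidates: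
  assumes "j < card T"
  shows "arg_min_on c' (candidates R T (assigned_tasks R T c j)) =
    (if e \<in> candidates R T (assigned_tasks R T c j) \<longrightarrow> c (round_winner R T c j) < c' e
     then round_winner R T c j else e)"
proof -
  let ?A = "assigned_tasks R T c j" and ?w = "round_winner R T c j"
  have A: "?A \<subseteq> T" "?A \<noteq> T" using assigned_tasks_subset_card[of j c] assms by auto
  have C: "candidates R T ?A \<subseteq> rt_edges R T" using A(1) by (rule candidates_subset_edges)
  have w: "?w \<in> rt_edges R T" "?w \<noteq> e"
    using round_winner_in_candidates[OF assms] C round_winner_ne_perturbed_edge[OF assms] by auto
  then have "c' ?w = c ?w" using costs_agree by blast
  then have "c' e \<noteq> c ?w" if "e \<in> candidates R T ?A"
    using inj_onD[OF inj_c', of e ?w] w C that by auto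
  moreover have "arg_min_on c' (candidates R T ?A) =
      (if e \<in> candidates R T ?A \<and> c' e < c ?w then e else ?w)"
    unfolding round_winner_def
  proof (rule arg_min_on_perturbed)
    show "finite (candidates R T ?A)" "candidates R T ?A \<noteq> {}"
      using A by (simp_all add: finite_candidates candidates_nonempty)
    show "inj_on c' (candidates R T ?A)" using inj_c' C by (rule inj_on_subset)
    show "\<forall>f\<in>candidates R T ?A - {e}. c' f = c f" using costs_agree C by blast
    show "arg_min_on c (candidates R T ?A) \<noteq> e" using w(2) by (simp add: round_winner_def)
  qed
  ultimately show ?thesis by auto
qed

lemma auction_unchanged_iff:
  "auction R T c = auction R T c' \<longleftrightarrow>
    (\<forall>j<card T. e \<in> candidates R T (assigned_tasks R T c j) \<longrightarrow> c (round_winner R T c j) < c' e)"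
    (is "_ \<longleftrightarrow> (\<forall>j<card T. ?keeps j)")
proof
  assume "\<forall>j<card T. ?keeps j"
  then have "\<forall>j<card T. arg_min_on c' (candidates R T (assigned_tasks R T c j)) = round_winner R T c j"
    by (simp add: perturbed_arg_min_on_candidates)
  then have "auction_state R T c (card T) = auction_state R T c' (card T)"
    by (rule auction_state_eq_if_same_winners)
  then show "auction R T c = auction R T c'" by (simp add: auction_def)
next
  assume same: "auction R T c = auction R T c'"
  show "\<forall>j<card T. ?keeps j"
  proof (rule ccontr)
    assume "\<not> (\<forall>j<card T. ?keeps j)"
    then obtain j where j: "j < card T" "\<not> ?keeps j"
      and earlier: "\<forall>i<j. \<not> (i < card T \<and> \<not> ?keeps i)"
      using exists_least_iff[of "\<lambda>j. j < card T \<and> \<not> ?keeps j"] by blast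
    have "auction_state R T c j = auction_state R T c' j"
    proof (rule auction_state_eq_if_same_winners, intro allI impI)
      fix i assume "i < j"
      with earlier j(1) show "arg_min_on c' (candidates R T (assigned_tasks R T c i)) = round_winner R T c i"
        by (simp add: perturbed_arg_min_on_candidates)
    qed
    then have "assigned_tasks R T c' j = assigned_tasks R T c j" by (simp add: assigned_tasks_def)
    with j have "round_winner R T c' j = e"
      by (simp add: round_winner_def perturbed_arg_min_on_candidates)
    then have "e \<in> set (fst (auction R T c'))"
      using j(1) nth_winner_list[of j "card T" R T c'] nth_mem[of j "winner_list R T c' (card T)"]
      by (simp add: auction_eq_final_state)
    with same e_not_won show False by simp
  qed
qed

end

theorem lemma6:
  fixes R T :: "'v set" and c c' :: "'v set \<Rightarrow> ennreal" and e :: "'v set"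
  assumes "finite R" and "finite T" and "R \<inter> T = {}" and "R \<noteq> {}"
    and "card (R \<union> T) \<ge> 3"
    and "inj_on c (rt_edges R T)" and "inj_on c' (rt_edges R T)"
    and "e \<in> rt_edges R T"
    and "e \<notin> set (fst (auction R T c))"
    and "\<forall>f \<in> rt_edges R T - {e}. c' f = c f"
  shows "auction R T c = auction R T c' \<longleftrightarrow>
    (let (W, a) = auction R T c; B = bid_rounds a e in
      B = {} \<or> Max ((\<lambda>k. c (W ! (k - 1))) ` B) < c' e)"
proof -
  interpret single_edge_perturbation R T c c' e
    using assms by unfold_locales auto
  show ?thesis
    unfolding auction_unchanged_iff bid_rounds_condition_iff[OF assms(8)] ..
qed

end
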